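(* Let $E$ be any execution of Algorithm C (described in the context). The sequence of values taken by the max-register $\mathit{logNumIncrems}$ in $E$ has the following properties: (i) it begins at $-1$; (ii) it is increasing; (iii) for every integer $i>cln$, if $i$ appears in the sequence then so does $i-1$.
   Context: Shared objects are treated as atomic. An exact counter supports Increment and Read; a Read returns the number of preceding Increments. A max-register supports MaxWrite$(v)$ and MaxRead; a MaxRead returns the largest value among all preceding MaxWrites, or the initial value if there was none. Algorithm C has the following parameters: - $k\ge2$ an integer, $n$ the number of processes, $m$ a positive integer; - $cln=\lceil\log_k n\rceil$ and $N=k^{cln}$. Shared objects: - an array $\mathit{Bucket}[0..\max\{1,\lceil\log_k\lceil m/n\rceil\rceil+1\}-1]$ of exact counters, each initially $0$; - a max-register $\mathit{logNumIncrems}$ with initial value $-1$. Each process has local variables $\mathit{lcounter}=0$, $\mathit{index}=0$ and $\mathit{threshold}=1$. Increment(): - $\mathit{lcounter}\gets\mathit{lcounter}+1$. - If $\mathit{lcounter}=\mathit{threshold}$, then: - $\mathit{Bucket}[\mathit{index}]$.Increment(); - $\mathit{lcounter}\gets0$; - $val\gets\mathit{Bucket}[\mathit{index}]$.Read(); - if $\mathit{index}=0$ and $val<N$, then $\mathit{logNumIncrems}$.MaxWrite$(\lfloor\log_k val\rfloor)$; - if $val\ge N$, then: - $\mathit{logNumIncrems}$.MaxWrite$(cln+\mathit{index})$; - $\mathit{index}\gets\mathit{index}+1$; - if $\mathit{index}>1$, then $\mathit{threshold}\gets k\cdot\mathit{threshold}$; - if $\mathit{index}=1$, then $\mathit{threshold}\gets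 k-1$. Read(): - $r\gets\mathit{logNumIncrems}$.MaxRead(). - If $r\ge0$, return $k^{r+1}$; otherwise return $0$. *)

theory Defs
  imports Complex_Main
begin

text \<open>Model of Algorithm C as an asynchronous shared-memory system.
Every step of a process performs at most one access to a shared object
(atomic), together with the local computation that follows it.\<close>

datatype pcv =
    Idle        \<comment> \<open>no pending operation\<close>
  | IncBucket   \<comment> \<open>about to perform Bucket[index].Increment()\<close>
  | ReadBucket  \<comment> \<open>about to perform val := Bucket[index].Read()\<close>
  | WriteLog    \<comment> \<open>about to perform logNumIncrems.MaxWrite(floor(log_k val))\<close>
  | WriteIdx    \<comment> \<open>about to perform logNumIncrems.MaxWrite(cln+index), then update index/threshold\<close>
  | DoRead      \<comment> \<open>about to perform logNumIncrems.MaxRead() (operation Read)\<close>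

record lstate =
  lcounter  :: nat
  index     :: nat
  threshold :: nat
  val       :: nat
  pc        :: pcv

record config =
  Bucket :: "nat \<Rightarrow> nat"
  logNumIncrems :: int
  loc :: "nat \<Rightarrow> lstate"

definition cln :: "nat \<Rightarrow> nat \<Rightarrow> nat" where
  "cln k n = nat \<lceil>log (real k) (real n)\<rceil>"

definition NN :: "nat \<Rightarrow> nat \<Rightarrow> nat" where
  "NN k n = k ^ cln k n"

definition bsize :: "nat \<Rightarrow> nat \<Rightarrow> nat \<Rightarrow> nat" where
  "bsize k n m = max 1 (nat (\<lceil>log (real k) (real_of_int \<lceil>real m / real n\<rceil>)\<rceil> + 1))"

definition init_lstate :: lstate where
  "init_lstate = \<lparr>lcounter = 0, index = 0, threshold = 1, val = 0, pc = Idle\<rparr>"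

definition init_config :: config where
  "init_config = \<lparr>Bucket = (\<lambda>_. 0), logNumIncrems = -1, loc = (\<lambda>_. init_lstate)\<rparr>"

text \<open>One atomic step of process p (a single shared-object access, or the
local start of an operation).  Accesses to Bucket[index] are only enabled when
index lies within the bounds of the array.\<close>
definition step :: "nat \<Rightarrow> nat \<Rightarrow> nat \<Rightarrow> nat \<Rightarrow> config \<Rightarrow> config \<Rightarrow> bool" where
  "step k n m p c c' \<longleftrightarrow>
     (let l = loc c p; setl = (\<lambda>l'. c\<lparr>loc := (loc c)(p := l')\<rparr>) in
      case pc l of
        Idle \<Rightarrow>
          \<comment> \<open>invoke Increment(): lcounter := lcounter+1; test against threshold\<close>
          (c' = setl (l\<lparr>lcounter := lcounter l + 1,
                          pc := (if lcounter l + 1 = threshold l then IncBucket else Idle)\<rparr>))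
          \<or>
          \<comment> \<open>invoke Read()\<close>
          (c' = setl (l\<lparr>pc := DoRead\<rparr>))
      | DoRead \<Rightarrow> c' = setl (l\<lparr>pc := Idle\<rparr>)
      | IncBucket \<Rightarrow>
          index l < bsize k n m \<and>
          c' = (setl (l\<lparr>lcounter := 0, pc := ReadBucket\<rparr>))
                 \<lparr>Bucket := (Bucket c)(index l := Bucket c (index l) + 1)\<rparr>
      | ReadBucket \<Rightarrow>
          index l < bsize k n m \<and>
          (let v = Bucket c (index l) in
           c' = setl (l\<lparr>val := v,
                        pc := (if index l = 0 \<and> v < NN k n then WriteLog
                               else if v \<ge> NN k n then WriteIdx else Idle)\<rparr>))
      | WriteLog \<Rightarrow>
          \<comment> \<open>here val < N, so the subsequent test val >= N fails\<close>
          c' = (setl (l\<lparr>pc := Idle\<rparr>))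
                 \<lparr>logNumIncrems := max (logNumIncrems c) \<lfloor>log (real k) (real (val l))\<rfloor>\<rparr>
      | WriteIdx \<Rightarrow>
          c' = (setl (l\<lparr>index := index l + 1,
                        threshold := (if index l + 1 > 1 then k * threshold l
                                      else if index l + 1 = 1 then k - 1 else threshold l),
                        pc := Idle\<rparr>))
                 \<lparr>logNumIncrems := max (logNumIncrems c) (int (cln k n + index l))\<rparr>)"

definition execution :: "nat \<Rightarrow> nat \<Rightarrow> nat \<Rightarrow> config list \<Rightarrow> bool" where
  "execution k n m cs \<longleftrightarrow>
     cs \<noteq> [] \<and> hd cs = init_config \<and>
     (\<forall>i. Suc i < length cs \<longrightarrow> (\<exists>p<n. step k n m p (cs ! i) (cs ! Suc i)))"

end

theory Submission
  imports Defs
begin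

text \<open>Every write to \<open>logNumIncrems\<close> either stores a value at most \<open>cln\<close> (a write of
  \<open>\<lfloor>log\<^sub>k val\<rfloor>\<close> happens only for \<open>val < N = k ^ cln\<close>) or stores \<open>cln + index\<close>, and a
  process reaches \<open>index \<ge> 1\<close> only after it has itself written \<open>cln + index - 1\<close>.
  Hence above \<open>cln\<close> the register can only grow by one at a time, and a sequence of
  max-writes of this kind is sorted and skips no value above \<open>cln\<close>.\<close>

definition gapless_max_write :: "int \<Rightarrow> int \<Rightarrow> int \<Rightarrow> bool" where
  "gapless_max_write b x y \<longleftrightarrow> (\<exists>w. y = max x w \<and> (w \<le> b \<or> w - 1 \<le> x))"

lemma gapless_max_write_le:
  "gapless_max_write b x y \<Longrightarrow> x \<le> y"
  unfolding gapless_max_write_def by auto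

lemma gapless_max_write_step_by_one:
  "gapless_max_write b x y \<Longrightarrow> b < y \<Longrightarrow> y \<noteq> x \<Longrightarrow> x = y - 1"
  unfolding gapless_max_write_def by auto

lemma sorted_if_gapless_max_writes:
  assumes "\<forall>j. Suc j < length xs \<longrightarrow> gapless_max_write b (xs ! j) (xs ! Suc j)"
  shows "sorted xs"
  using assms unfolding sorted_iff_nth_Suc by (blast dest: gapless_max_write_le)

lemma pred_in_set_if_gapless_max_writes:
  fixes xs :: "int list"
  assumes steps: "\<forall>j. Suc j < length xs \<longrightarrow> gapless_max_write b (xs ! j) (xs ! Suc j)"
    and start: "xs ! 0 \<le> b" and "b < i" and "i \<in> set xs"
  shows "i - 1 \<in> set xs"
proof -
  obtain j where "j < length xs" "xs ! j = i"
    using \<open>i \<in> set xs\<close> by (auto simp: in_set_conv_nth)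
  then show ?thesis
  proof (induction j)
    case 0
    then show ?case using start \<open>b < i\<close> by simp
  next
    case (Suc j)
    have "gapless_max_write b (xs ! j) (xs ! Suc j)"
      using steps Suc.prems(1) by blast
    then have "xs ! j = i \<or> xs ! j = i - 1"
      using gapless_max_write_step_by_one \<open>b < i\<close> Suc.prems(2) by metis
    then show ?case
    proof
      assume "xs ! j = i"
      from Suc.IH[OF _ this] Suc.prems(1) show ?case by simp
    next
      assume "xs ! j = i - 1"
      with Suc.prems(1) show ?case by (metis Suc_lessD nth_mem)
    qed
  qed
qed

lemma floor_log_le_cln:
  assumes "k \<ge> 2" "v < NN k n"
  shows "\<lfloor>log (real k) (real v)\<rfloor> \<le> int (cln k n)"
proof (cases "v = 0")
  case True
  then show ?thesis by (simp add: log_def)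
next
  case False
  have "real v < real k ^ cln k n"
    using assms(2) unfolding NN_def by (metis of_nat_less_iff of_nat_power)
  then have "log (real k) (real v) < log (real k) (real k ^ cln k n)"
    using False assms(1) by (subst log_less_cancel_iff) auto
  also have "\<dots> = real (cln k n)"
    using assms(1) by (simp add: log_nat_power)
  finally show ?thesis by linarith
qed

definition log_invariant :: "nat \<Rightarrow> nat \<Rightarrow> config \<Rightarrow> bool" where
  "log_invariant k n c \<longleftrightarrow>
     (\<forall>p. pc (loc c p) = WriteLog \<longrightarrow> val (loc c p) < NN k n) \<and>
     (\<forall>p. 1 \<le> index (loc c p) \<longrightarrow> int (cln k n + index (loc c p)) - 1 \<le> logNumIncrems c)"

lemma log_invariant_init_config: "log_invariant k n init_config"
  unfolding log_invariant_def init_config_def init_lstate_def by simp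

lemma step_WriteLog:
  assumes "step k n m p c c'" and "pc (loc c p) = WriteLog"
  shows "c' = (c\<lparr>loc := (loc c)(p := (loc c p)\<lparr>pc := Idle\<rparr>)\<rparr>)
    \<lparr>logNumIncrems := max (logNumIncrems c) \<lfloor>log (real k) (real (val (loc c p)))\<rfloor>\<rparr>"
  using assms unfolding step_def by (simp add: Let_def)

lemma step_WriteIdx:
  assumes "step k n m p c c'" and "pc (loc c p) = WriteIdx"
  obtains t where "c' = (c\<lparr>loc := (loc c)(p := (loc c p)
        \<lparr>index := index (loc c p) + 1, threshold := t, pc := Idle\<rparr>)\<rparr>)
    \<lparr>logNumIncrems := max (logNumIncrems c) (int (cln k n + index (loc c p)))\<rparr>"
  using assms unfolding step_def by (simp add: Let_def)

lemma step_no_max_write: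
  assumes "step k n m p c c'" and "pc (loc c p) \<notin> {WriteLog, WriteIdx}"
  shows "logNumIncrems c' = logNumIncrems c"
    and "pc (loc c' p) = WriteLog \<Longrightarrow> val (loc c' p) < NN k n"
    and "q \<noteq> p \<Longrightarrow> loc c' q = loc c q"
    and "index (loc c' p) = index (loc c p)"
  using assms unfolding step_def
  by (cases "pc (loc c p)"; auto simp: Let_def split: if_splits)+

lemma step_preserves_log_invariant:
  assumes st: "step k n m p c c'" and inv: "log_invariant k n c"
  shows "log_invariant k n c'"
proof -
  consider "pc (loc c p) = WriteLog" | "pc (loc c p) = WriteIdx"
    | "pc (loc c p) \<notin> {WriteLog, WriteIdx}"
    by blast
  then show ?thesis
  proof cases
    case 1
    from inv show ?thesis
      unfolding step_WriteLog[OF st 1] log_invariant_def by auto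
  next
    case 2
    obtain t where c': "c' = (c\<lparr>loc := (loc c)(p := (loc c p)
        \<lparr>index := index (loc c p) + 1, threshold := t, pc := Idle\<rparr>)\<rparr>)
      \<lparr>logNumIncrems := max (logNumIncrems c) (int (cln k n + index (loc c p)))\<rparr>"
      using step_WriteIdx[OF st 2] .
    from inv show ?thesis
      unfolding c' log_invariant_def by auto
  next
    case 3
    note keep = step_no_max_write[OF st 3]
    show ?thesis
      unfolding log_invariant_def
    proof (intro conjI allI impI)
      fix q
      assume "pc (loc c' q) = WriteLog"
      with inv keep show "val (loc c' q) < NN k n"
        unfolding log_invariant_def by (cases "q = p") auto
    next
      fix q
      assume "1 \<le> index (loc c' q)"
      with inv keep show "int (cln k n + index (loc c' q)) - 1 \<le> logNumIncrems c'"
        unfolding log_invariant_def by (cases "q = p") auto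
    qed
  qed
qed

lemma step_gapless_max_write:
  assumes k: "k \<ge> 2" and st: "step k n m p c c'" and inv: "log_invariant k n c"
  shows "gapless_max_write (int (cln k n)) (logNumIncrems c) (logNumIncrems c')"
proof -
  let ?l = "loc c p" and ?L = "logNumIncrems c"
  consider "pc ?l = WriteLog" | "pc ?l = WriteIdx" | "pc ?l \<notin> {WriteLog, WriteIdx}"
    by blast
  then show ?thesis
  proof cases
    case 1
    have "\<lfloor>log (real k) (real (val ?l))\<rfloor> \<le> int (cln k n)"
      using floor_log_le_cln[OF k] inv 1 unfolding log_invariant_def by blast
    then show ?thesis
      unfolding step_WriteLog[OF st 1] gapless_max_write_def by auto
  next
    case 2
    have "1 \<le> index ?l \<Longrightarrow> int (cln k n + index ?l) - 1 \<le> ?L"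
      using inv unfolding log_invariant_def by blast
    then have "int (cln k n + index ?l) \<le> int (cln k n) \<or> int (cln k n + index ?l) - 1 \<le> ?L"
      by (cases "index ?l") auto
    moreover obtain t where "c' = (c\<lparr>loc := (loc c)(p := ?l
        \<lparr>index := index ?l + 1, threshold := t, pc := Idle\<rparr>)\<rparr>)
      \<lparr>logNumIncrems := max ?L (int (cln k n + index ?l))\<rparr>"
      using step_WriteIdx[OF st 2] .
    ultimately show ?thesis
      unfolding gapless_max_write_def
      by (intro exI[of _ "int (cln k n + index ?l)"]) simp
  next
    case 3
    show ?thesis
      unfolding step_no_max_write(1)[OF st 3] gapless_max_write_def
      by (rule exI[of _ ?L]) simp
  qed
qed

lemma execution_log_invariant:
  assumes E: "execution k n m E" and "j < length E"
  shows "log_invariant k n (E ! j)"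
  using \<open>j < length E\<close>
proof (induction j)
  case 0
  have "E ! 0 = init_config"
    using E unfolding execution_def by (metis hd_conv_nth)
  then show ?case using log_invariant_init_config by simp
next
  case (Suc j)
  then obtain p where "step k n m p (E ! j) (E ! Suc j)"
    using E unfolding execution_def by auto
  then show ?case using step_preserves_log_invariant Suc by auto
qed

lemma execution_gapless_max_writes:
  assumes "k \<ge> 2" and E: "execution k n m E"
  shows "\<forall>j. Suc j < length (map logNumIncrems E) \<longrightarrow>
    gapless_max_write (int (cln k n)) (map logNumIncrems E ! j) (map logNumIncrems E ! Suc j)"
proof (intro allI impI)
  fix j
  assume j: "Suc j < length (map logNumIncrems E)"
  then obtain p where "step k n m p (E ! j) (E ! Suc j)"
    using E unfolding execution_def by auto
  with assms j execution_log_invariant[OF E, of j] show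
    "gapless_max_write (int (cln k n)) (map logNumIncrems E ! j) (map logNumIncrems E ! Suc j)"
    using step_gapless_max_write by simp
qed

theorem lemma15:
  fixes k n m :: nat and E :: "config list"
  assumes "k \<ge> 2" and "n \<ge> 1" and "m \<ge> 1"
    and "execution k n m E"
  shows "hd (map logNumIncrems E) = -1
       \<and> sorted (map logNumIncrems E)
       \<and> (\<forall>i::int. i > int (cln k n) \<longrightarrow> i \<in> set (map logNumIncrems E)
                    \<longrightarrow> i - 1 \<in> set (map logNumIncrems E))"
proof -
  have "E \<noteq> []" and "hd E = init_config"
    using assms(4) unfolding execution_def by auto
  then have start: "map logNumIncrems E ! 0 = -1"
    by (simp add: hd_conv_nth init_config_def)
  note steps = execution_gapless_max_writes[OF assms(1,4)]
  have "hd (map logNumIncrems E) = -1"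
    using start \<open>E \<noteq> []\<close> by (simp add: hd_conv_nth)
  moreover have "sorted (map logNumIncrems E)"
    using sorted_if_gapless_max_writes[OF steps] .
  moreover have "\<forall>i::int. i > int (cln k n) \<longrightarrow> i \<in> set (map logNumIncrems E)
                    \<longrightarrow> i - 1 \<in> set (map logNumIncrems E)"
    using pred_in_set_if_gapless_max_writes[OF steps] start by simp
  ultimately show ?thesis by blast
qed

end
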